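(* Let $n\ge2$ and let $\Omega\subset\mathbb{R}^n$ be a bounded connected open set of class $C^2$. Then $$\varphi(y)\,H(y)\le \frac1n\qquad\text{for every } y\in\partial\Omega.$$
   Context: $\nu(y)$ denotes the outward unit normal to $\partial\Omega$ at $y$. $\kappa_1(y),\dots,\kappa_{n-1}(y)$ are the principal curvatures of $\partial\Omega$ at $y$, i.e. the eigenvalues of the differential of the Gauss map $\nu$ at $y$ (a ball of radius $r$ has all principal curvatures equal to $1/r$), and $H(y)=\frac{\kappa_1(y)+\cdots+\kappa_{n-1}(y)}{n-1}$. $d_\Omega(x)=\min_{z\in\partial\Omega}|x-z|$. The cut value of $y\in\partial\Omega$ is $\lambda(y)=\sup\{t\ge0:\ d_\Omega(y-t\nu(y))=t\}$. The function $\varphi$ is $\varphi(y)=\int_0^{\lambda(y)}\prod_{j=1}^{n-1}[1-t\kappa_j(y)]\,dt$. *)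

theory Defs
  imports "HOL-Analysis.Analysis"
begin

definition C2_defining ::
  "(real^'n) set \<Rightarrow> real^'n \<Rightarrow> (real^'n) set \<Rightarrow> (real^'n \<Rightarrow> real) \<Rightarrow> (real^'n \<Rightarrow> real^'n) \<Rightarrow> bool"
where
  "C2_defining \<Omega> y U \<rho> g \<longleftrightarrow>
     open U \<and> y \<in> U \<and>
     (\<forall>x\<in>U. (\<rho> has_derivative (\<lambda>h. g x \<bullet> h)) (at x)) \<and>
     (\<exists>D :: (real^'n) \<Rightarrow> ((real^'n) \<Rightarrow>\<^sub>L (real^'n)).
        (\<forall>x\<in>U. (g has_derivative blinfun_apply (D x)) (at x)) \<and> continuous_on U D) \<and>
     (\<forall>x\<in>U. g x \<noteq> 0) \<and>
     \<Omega> \<inter> U = {x\<in>U. \<rho> x < 0}"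

definition C2_boundary :: "(real^'n) set \<Rightarrow> bool" where
  "C2_boundary \<Omega> \<longleftrightarrow> open \<Omega> \<and>
     (\<forall>y\<in>frontier \<Omega>. \<exists>U \<rho> g. C2_defining \<Omega> y U \<rho> g)"

text \<open>Outward unit normal (independent of the chosen defining function).\<close>
definition outer_normal :: "(real^'n) set \<Rightarrow> real^'n \<Rightarrow> real^'n" where
  "outer_normal \<Omega> y =
     (SOME v. \<exists>U \<rho> g. C2_defining \<Omega> y U \<rho> g \<and> v = (1 / norm (g y)) *\<^sub>R g y)"

definition tangent_proj :: "(real^'n) set \<Rightarrow> real^'n \<Rightarrow> real^'n \<Rightarrow> real^'n" where
  "tangent_proj \<Omega> y v = v - (v \<bullet> outer_normal \<Omega> y) *\<^sub>R outer_normal \<Omega> y"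

text \<open>kappa 0, ..., kappa (n-2) are the principal curvatures at y, listed with
  (algebraic) multiplicity: they are the eigenvalues of the differential L of the
  Gauss map restricted to the tangent space T_y.  Extending L|T_y by 0 on the normal
  direction gives the map L o P (P the projection onto T_y), whose characteristic
  polynomial is s * prod_j (s - kappa j).\<close>
definition principal_curvatures ::
  "(real^'n) set \<Rightarrow> real^'n \<Rightarrow> (nat \<Rightarrow> real) \<Rightarrow> bool" where
  "principal_curvatures \<Omega> y \<kappa> \<longleftrightarrow>
     (\<exists>L. (outer_normal \<Omega> has_derivative L) (at y within frontier \<Omega>) \<and>
        (\<forall>s::real. det (s *\<^sub>R mat 1 - matrix (L \<circ> tangent_proj \<Omega> y))
                     = s * (\<Prod>j<CARD('n) - 1. (s - \<kappa> j))))"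

definition mean_curv :: "(real^'n) set \<Rightarrow> (nat \<Rightarrow> real) \<Rightarrow> real" where
  "mean_curv \<Omega> \<kappa> = (\<Sum>j<CARD('n) - 1. \<kappa> j) / real (CARD('n) - 1)"

definition dist_bd :: "(real^'n) set \<Rightarrow> real^'n \<Rightarrow> real" where
  "dist_bd \<Omega> x = infdist x (frontier \<Omega>)"

definition cut_value :: "(real^'n) set \<Rightarrow> real^'n \<Rightarrow> real" where
  "cut_value \<Omega> y = Sup {t. t \<ge> 0 \<and> dist_bd \<Omega> (y - t *\<^sub>R outer_normal \<Omega> y) = t}"

definition phi_fun :: "(real^'n) set \<Rightarrow> real^'n \<Rightarrow> (nat \<Rightarrow> real) \<Rightarrow> real" where
  "phi_fun \<Omega> y \<kappa> =
     integral {0..cut_value \<Omega> y} (\<lambda>t. \<Prod>j<CARD('n) - 1. (1 - t * \<kappa> j))"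

end

theory Submission
  imports Defs
begin

text \<open>
  Fix a boundary point y, a local C^2 defining function rho of Omega near y
  with gradient g, and write N = g y / |g y| for the outer normal.
  (1) The normal is well defined: every defining function yields the same unit vector
      g y / |g y|, and rho vanishes exactly on the boundary.
  (2) If the inner normal segment realises the distance up to time t, i.e.
      d(y - t N) = t, then the open ball B(y - t N, t) lies in Omega.
  (3) Comparing rho along parabolas y + s v - beta s^2 N inside that ball gives
      v . Dg(y) v <= |g y| |v|^2 / t for every tangent vector v.
  (4) Approximating y by boundary points y + s v + o(s) N shows that the differential
      L of the Gauss map satisfies v . L v = v . Dg(y) v / |g y| on tangent vectors.
  (5) An eigenvector of L restricted to the tangent space for kappa_j then gives
      t kappa_j <= 1 for such t, hence for every 0 <= t <= lambda(y).
  (6) A real-variable estimate finishes: by AM-GM the integrand of phi is at most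
      (1 - t H)^(n-1), whose integral over [0, lambda] is at most 1 / (n H).
\<close>

lemma exists_small_positive:
  fixes a b c d :: real
  assumes "a > 0" "b > 0" "c \<ge> 0" "d > 0"
  shows "\<exists>s>0. s < a \<and> s < b \<and> s * c < d"
proof -
  define s where "s = min a (min b (d / (c + 1))) / 2"
  have "d / (c + 1) > 0" using assms by simp
  hence s0: "s > 0" using assms by (simp add: s_def)
  have "min a (min b (d / (c + 1))) \<le> d / (c + 1)" by simp
  hence "s \<le> d / (c + 1) / 2" unfolding s_def by (simp only: divide_right_mono)
  hence "s * (c + 1) \<le> d / 2" using assms by (simp add: field_simps)
  hence "s * c < d" using s0 assms by (simp add: algebra_simps)
  moreover have "s < a" "s < b" using assms s0 by (auto simp: s_def)
  ultimately show ?thesis using s0 by blast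
qed

lemma has_real_derivative_along_curve:
  fixes \<rho> :: "'a::real_inner \<Rightarrow> real"
  assumes z: "(z has_vector_derivative z') (at s)"
    and r: "(\<rho> has_derivative (\<lambda>h. G \<bullet> h)) (at (z s))"
  shows "((\<lambda>s. \<rho> (z s)) has_real_derivative (G \<bullet> z')) (at s)"
proof -
  have "((\<rho> \<circ> z) has_derivative ((\<lambda>h. G \<bullet> h) \<circ> (\<lambda>x. x *\<^sub>R z'))) (at s)"
    using z r unfolding has_vector_derivative_def by (rule diff_chain_at)
  moreover have "((\<lambda>h. G \<bullet> h) \<circ> (\<lambda>x. x *\<^sub>R z')) = (*) (G \<bullet> z')"
    by (auto simp: fun_eq_iff mult.commute)
  ultimately show ?thesis unfolding has_field_derivative_def by (simp add: comp_def)
qed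

lemma decreasing_along_descent_direction:
  fixes \<rho> :: "'a::real_inner \<Rightarrow> real"
  assumes r: "(\<rho> has_derivative (\<lambda>h. G \<bullet> h)) (at x)" and slope: "G \<bullet> w < 0"
  shows "\<exists>d>0. \<forall>s. 0 < s \<and> s < d \<longrightarrow> \<rho> (x + s *\<^sub>R w) < \<rho> x"
proof -
  have "((\<lambda>s. x + s *\<^sub>R w) has_vector_derivative w) (at 0)"
    by (auto intro!: derivative_eq_intros)
  hence "((\<lambda>s. \<rho> (x + s *\<^sub>R w)) has_real_derivative (G \<bullet> w)) (at 0)"
    using has_real_derivative_along_curve[of "\<lambda>s. x + s *\<^sub>R w" w 0 \<rho> G] r by simp
  from DERIV_neg_dec_right[OF this slope] show ?thesis by auto
qed

lemma unit_inner_lt1: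
  fixes n1 n2 :: "'a::real_inner"
  assumes "norm n1 = 1" "norm n2 = 1" "n1 \<noteq> n2"
  shows "n1 \<bullet> n2 < 1"
proof -
  have "n1 \<bullet> n1 = 1" "n2 \<bullet> n2 = 1"
    using assms(1,2) by (simp_all add: power2_norm_eq_inner[symmetric])
  have "0 < norm (n1 - n2)^2" using assms(3) by simp
  also have "norm (n1 - n2)^2 = 2 - 2 * (n1 \<bullet> n2)"
    using \<open>n1 \<bullet> n1 = 1\<close> \<open>n2 \<bullet> n2 = 1\<close>
    by (simp add: power2_norm_eq_inner inner_diff inner_commute)
  finally show ?thesis by simp
qed

lemma zero_of_nearly_linear_function:
  fixes F :: "real \<Rightarrow> real"
  assumes cont: "continuous_on {-b..b} F" and b: "b \<ge> 0" and G: "G > 0"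
    and near: "\<And>a. \<bar>a\<bar> \<le> b \<Longrightarrow> \<bar>F a - a * G\<bar> \<le> b * G / 2"
  shows "\<exists>a. \<bar>a\<bar> \<le> b \<and> F a = 0"
proof -
  have "b * G \<ge> 0" using b G by simp
  moreover have "\<bar>F b - b * G\<bar> \<le> b * G / 2" "\<bar>F (- b) + b * G\<bar> \<le> b * G / 2"
    using near[of b] near[of "- b"] b by auto
  ultimately have "F (- b) \<le> 0" "0 \<le> F b" by arith+
  then obtain a where "- b \<le> a" "a \<le> b" "F a = 0" using IVT'[OF _ _ _ cont] b by auto
  thus ?thesis by (intro exI[of _ a]) auto
qed

lemma norm_orth_sq:
  fixes v N :: "'a::real_inner"
  assumes "v \<bullet> N = 0" "norm N = 1"
  shows "norm (s *\<^sub>R v + a *\<^sub>R N) ^ 2 = s^2 * (v \<bullet> v) + a^2"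
proof -
  have NN: "N \<bullet> N = 1" using assms(2) power2_norm_eq_inner[of N] by simp
  have vN: "N \<bullet> v = 0" using assms(1) by (simp add: inner_commute)
  show ?thesis unfolding power2_norm_eq_inner
    by (simp add: inner_add_left inner_add_right assms(1) vN NN power2_eq_square algebra_simps)
qed

lemma difference_quotient_sequence:
  fixes f :: "'a::real_normed_vector \<Rightarrow> 'b::real_normed_vector"
  assumes d: "(f has_derivative F) (at y within S)"
    and xS: "\<And>k. x k \<in> S" and xne: "\<And>k. x k \<noteq> y"
    and s0: "s \<longlonglongrightarrow> 0" and spos: "\<And>k. s k > 0"
    and v: "(\<lambda>k. (x k - y) /\<^sub>R s k) \<longlonglongrightarrow> v"
  shows "(\<lambda>k. (f (x k) - f y) /\<^sub>R s k) \<longlonglongrightarrow> F v"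
proof -
  define R where "R z = (1 / norm (z - y)) *\<^sub>R (f z - (f y + F (z - y)))" for z
  have bl: "bounded_linear F" and R: "(R \<longlongrightarrow> 0) (at y within S)"
    using d unfolding has_derivative_within R_def by auto
  have xe: "\<And>k. x k = y + s k *\<^sub>R ((x k - y) /\<^sub>R s k)"
    using spos by (simp add: less_imp_neq[symmetric])
  have "(\<lambda>k. y + s k *\<^sub>R ((x k - y) /\<^sub>R s k)) \<longlonglongrightarrow> y + 0 *\<^sub>R v"
    by (intro tendsto_intros s0 v)
  hence "x \<longlonglongrightarrow> y" using xe by simp
  hence "filterlim x (at y within S) sequentially"
    using xS xne by (auto simp: filterlim_at)
  hence Rk: "(\<lambda>k. R (x k)) \<longlonglongrightarrow> 0" using filterlim_compose[OF R] by blast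
  have split: "(f (x k) - f y) /\<^sub>R s k
      = F ((x k - y) /\<^sub>R s k) + norm ((x k - y) /\<^sub>R s k) *\<^sub>R R (x k)" for k
  proof -
    have n: "norm (x k - y) \<noteq> 0" using xne[of k] by simp
    have "norm ((x k - y) /\<^sub>R s k) * (1 / norm (x k - y)) = 1 / s k"
      using n spos[of k] by (simp add: divide_inverse)
    hence "norm ((x k - y) /\<^sub>R s k) *\<^sub>R R (x k) = (1 / s k) *\<^sub>R (f (x k) - (f y + F (x k - y)))"
      by (simp add: R_def)
    moreover have "F ((x k - y) /\<^sub>R s k) = (1 / s k) *\<^sub>R F (x k - y)"
      using linear_cmul[OF bounded_linear.linear[OF bl]] by (simp add: divide_inverse)
    ultimately show ?thesis by (simp add: scaleR_diff_right scaleR_add_right algebra_simps divide_inverse_commute)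
  qed
  have "(\<lambda>k. F ((x k - y) /\<^sub>R s k) + norm ((x k - y) /\<^sub>R s k) *\<^sub>R R (x k)) \<longlonglongrightarrow> F v + norm v *\<^sub>R 0"
    by (intro tendsto_intros bounded_linear.tendsto[OF bl] v Rk)
  thus ?thesis unfolding split by simp
qed

subsection \<open>Local defining functions and the outer normal\<close>

lemma C2_defining_recenter:
  "C2_defining \<Omega> y U \<rho> g \<Longrightarrow> x \<in> U \<Longrightarrow> C2_defining \<Omega> x U \<rho> g"
  unfolding C2_defining_def by blast

lemma C2_defining_continuous:
  "C2_defining \<Omega> y U \<rho> g \<Longrightarrow> continuous_on U \<rho>"
  unfolding C2_defining_def
  by (meson has_derivative_continuous continuous_at_imp_continuous_on)

text \<open>A defining function vanishes on the boundary: it is not negative there since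
  Omega is open, and not positive since Omega accumulates at boundary points.\<close>
lemma C2_defining_zero_on_frontier:
  assumes C: "C2_defining \<Omega> x U \<rho> g" and "open \<Omega>" and x: "x \<in> frontier \<Omega>"
  shows "\<rho> x = 0"
proof -
  have xU: "x \<in> U" and oU: "open U" and eq: "\<Omega> \<inter> U = {x\<in>U. \<rho> x < 0}"
    using C unfolding C2_defining_def by auto
  have "x \<notin> \<Omega>" using x \<open>open \<Omega>\<close> by (simp add: frontier_def interior_open)
  hence "\<not> \<rho> x < 0" using xU eq by auto
  moreover have "\<not> \<rho> x > 0"
  proof
    assume pos: "\<rho> x > 0"
    define P where "P = {z\<in>U. \<rho> z \<in> {0<..}}"
    have "open P"
      using continuous_open_preimage[OF C2_defining_continuous[OF C] oU, of "{0<..}"]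
      by (auto simp: P_def vimage_def Int_def)
    moreover have "P \<inter> \<Omega> = {}" using eq by (auto simp: P_def set_eq_iff) (metis less_asym)
    ultimately have "P \<inter> closure \<Omega> = {}" using open_Int_closure_eq_empty by blast
    thus False using x xU pos by (auto simp: P_def frontier_def)
  qed
  ultimately show ?thesis by auto
qed

text \<open>Conversely, zeros of a defining function are boundary points: moving against
  the gradient enters Omega.\<close>
lemma C2_defining_zero_imp_frontier:
  assumes C: "C2_defining \<Omega> y U \<rho> g" and z: "z \<in> U" and r: "\<rho> z = 0"
  shows "z \<in> frontier \<Omega>"
proof -
  have oU: "open U" and gnz: "g z \<noteq> 0"
    and d: "(\<rho> has_derivative (\<lambda>h. g z \<bullet> h)) (at z)"
    and eq: "\<Omega> \<inter> U = {x\<in>U. \<rho> x < 0}"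
    using C z unfolding C2_defining_def by auto
  have zn: "z \<notin> \<Omega>" by (metis IntI eq less_irrefl mem_Collect_eq r z)
  have "g z \<bullet> (- g z) < 0" using gnz by simp
  from decreasing_along_descent_direction[OF d this] obtain d1 where d1: "d1 > 0"
    "\<forall>s. 0 < s \<and> s < d1 \<longrightarrow> \<rho> (z + s *\<^sub>R (- g z)) < \<rho> z" by blast
  obtain e3 where e3: "e3 > 0" "ball z e3 \<subseteq> U" using oU z openE by blast
  have "z \<in> closure \<Omega>"
    unfolding closure_approachable
  proof (intro allI impI)
    fix e :: real assume e: "e > 0"
    obtain s where s0: "s > 0" and "s < d1" and sm: "s * norm (g z) < min e e3"
      using exists_small_positive[OF d1(1) d1(1) norm_ge_zero, of "min e e3"] e e3 by auto
    have dd: "dist (z + s *\<^sub>R (- g z)) z = s * norm (g z)" using s0 by (simp add: dist_norm)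
    have inU: "z + s *\<^sub>R (- g z) \<in> U" using e3 dd sm by (auto simp: dist_commute)
    have "\<rho> (z + s *\<^sub>R (- g z)) < 0" using d1 s0 \<open>s < d1\<close> r by auto
    hence "z + s *\<^sub>R (- g z) \<in> \<Omega>" using eq inU by blast
    moreover have "dist (z + s *\<^sub>R (- g z)) z < e" using dd sm by linarith
    ultimately show "\<exists>y\<in>\<Omega>. dist y z < e" by blast
  qed
  thus ?thesis using zn by (simp add: frontier_def) (meson interior_subset subsetD)
qed

text \<open>Two defining functions at a boundary point have the same normalised gradient:
  otherwise the direction n2 - n1 would point into Omega for the first function and
  out of Omega for the second.\<close>
lemma normalised_gradients_agree:
  assumes C1: "C2_defining \<Omega> x U1 \<rho>1 g1" and C2: "C2_defining \<Omega> x U2 \<rho>2 g2"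
    and "open \<Omega>" and x: "x \<in> frontier \<Omega>"
  shows "(1 / norm (g1 x)) *\<^sub>R g1 x = (1 / norm (g2 x)) *\<^sub>R g2 x"
proof (rule ccontr)
  define n1 where "n1 = (1 / norm (g1 x)) *\<^sub>R g1 x"
  define n2 where "n2 = (1 / norm (g2 x)) *\<^sub>R g2 x"
  assume "\<not> ?thesis"
  hence lt: "n1 \<bullet> n2 < 1"
    using C1 C2 by (intro unit_inner_lt1) (auto simp: n1_def n2_def C2_defining_def)
  have xU1: "x \<in> U1" and oU1: "open U1" and g1nz: "g1 x \<noteq> 0"
    and d1: "(\<rho>1 has_derivative (\<lambda>h. g1 x \<bullet> h)) (at x)"
    and eq1: "\<Omega> \<inter> U1 = {x\<in>U1. \<rho>1 x < 0}"
    using C1 unfolding C2_defining_def by auto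
  have xU2: "x \<in> U2" and oU2: "open U2" and g2nz: "g2 x \<noteq> 0"
    and d2: "((\<lambda>z. - \<rho>2 z) has_derivative (\<lambda>h. (- g2 x) \<bullet> h)) (at x)"
    and eq2: "\<Omega> \<inter> U2 = {x\<in>U2. \<rho>2 x < 0}"
    using C2 has_derivative_minus unfolding C2_defining_def by fastforce+
  define w where "w = n2 - n1"
  have "g1 x \<bullet> w = norm (g1 x) * (n1 \<bullet> n2 - 1)"
    using g1nz by (simp add: w_def n1_def n2_def inner_diff_right
        power2_norm_eq_inner[symmetric] power2_eq_square algebra_simps)
  hence w1: "g1 x \<bullet> w < 0" using lt g1nz by (simp add: mult_pos_neg)
  have "g2 x \<bullet> w = norm (g2 x) * (1 - n1 \<bullet> n2)"
    using g2nz by (simp add: w_def n1_def n2_def inner_diff_right inner_commute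
        power2_norm_eq_inner[symmetric] power2_eq_square algebra_simps)
  hence w2: "(- g2 x) \<bullet> w < 0" using lt g2nz by simp
  obtain e1 where e1: "e1 > 0" "\<forall>s. 0 < s \<and> s < e1 \<longrightarrow> \<rho>1 (x + s *\<^sub>R w) < \<rho>1 x"
    using decreasing_along_descent_direction[OF d1 w1] by blast
  obtain e2 where e2: "e2 > 0" "\<forall>s. 0 < s \<and> s < e2 \<longrightarrow> - \<rho>2 (x + s *\<^sub>R w) < - \<rho>2 x"
    using decreasing_along_descent_direction[OF d2 w2] by blast
  obtain e3 where e3: "e3 > 0" "ball x e3 \<subseteq> U1 \<inter> U2"
    using open_Int[OF oU1 oU2] xU1 xU2 by (meson IntI openE)
  obtain s where s0: "s > 0" and "s < e1" "s < e2" and "s * norm w < e3"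
    using exists_small_positive[OF e1(1) e2(1) norm_ge_zero e3(1)] by blast
  hence inB: "x + s *\<^sub>R w \<in> U1 \<inter> U2" using e3 s0 by (auto simp: dist_norm)
  have "\<rho>1 (x + s *\<^sub>R w) < 0"
    using e1 \<open>s < e1\<close> s0 C2_defining_zero_on_frontier[OF C1 \<open>open \<Omega>\<close> x] by auto
  hence "x + s *\<^sub>R w \<in> \<Omega>" using eq1 inB by blast
  moreover have "\<rho>2 (x + s *\<^sub>R w) > 0"
    using e2 \<open>s < e2\<close> s0 C2_defining_zero_on_frontier[OF C2 \<open>open \<Omega>\<close> x] by force
  ultimately show False using eq2 inB by (auto simp: set_eq_iff) (metis less_asym)
qed

lemma outer_normal_eq:
  assumes C: "C2_defining \<Omega> x U \<rho> g" and "open \<Omega>" and x: "x \<in> frontier \<Omega>"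
  shows "outer_normal \<Omega> x = (1 / norm (g x)) *\<^sub>R g x"
proof -
  have "\<exists>v. \<exists>U \<rho> g. C2_defining \<Omega> x U \<rho> g \<and> v = (1 / norm (g x)) *\<^sub>R g x"
    using C by blast
  from someI_ex[OF this] obtain U' \<rho>' g' where
    C': "C2_defining \<Omega> x U' \<rho>' g'" and e: "outer_normal \<Omega> x = (1 / norm (g' x)) *\<^sub>R g' x"
    unfolding outer_normal_def by blast
  show ?thesis using e normalised_gradients_agree[OF C' C \<open>open \<Omega>\<close> x] by simp
qed

lemma outer_normal_facts:
  assumes C: "C2_defining \<Omega> y U \<rho> g" and "open \<Omega>" and y: "y \<in> frontier \<Omega>"
  shows "norm (outer_normal \<Omega> y) = 1" "g y \<bullet> outer_normal \<Omega> y = norm (g y)"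
    "g y = norm (g y) *\<^sub>R outer_normal \<Omega> y"
proof -
  have gnz: "g y \<noteq> 0" using C unfolding C2_defining_def by auto
  note e = outer_normal_eq[OF assms]
  show "norm (outer_normal \<Omega> y) = 1" using gnz by (simp add: e)
  show "g y \<bullet> outer_normal \<Omega> y = norm (g y)" using gnz
    by (simp add: e power2_norm_eq_inner[symmetric] power2_eq_square)
  show "g y = norm (g y) *\<^sub>R outer_normal \<Omega> y" using gnz by (simp add: e)
qed

subsection \<open>Balls touching the boundary from inside\<close>

text \<open>If the point y - t N is at distance exactly t from the boundary, the open ball
  of radius t around it misses the boundary and contains points of Omega near y
  (just inside along -N), so by connectedness it lies in Omega.\<close>
lemma interior_ball_in_domain:
  assumes C: "C2_defining \<Omega> y U \<rho> g" and oO: "open \<Omega>" and y: "y \<in> frontier \<Omega>"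
    and t: "t > 0" and dt: "dist_bd \<Omega> (y - t *\<^sub>R outer_normal \<Omega> y) = t"
  shows "ball (y - t *\<^sub>R outer_normal \<Omega> y) t \<subseteq> \<Omega>"
proof -
  define N where "N = outer_normal \<Omega> y"
  note nf = outer_normal_facts[OF C oO y, folded N_def]
  have yU: "y \<in> U" and oU: "open U" and gnz: "g y \<noteq> 0"
    and der: "(\<rho> has_derivative (\<lambda>h. g y \<bullet> h)) (at y)"
    and eq: "\<Omega> \<inter> U = {x\<in>U. \<rho> x < 0}"
    using C unfolding C2_defining_def by auto
  define c where "c = y - t *\<^sub>R N"
  have disj: "ball c t \<inter> frontier \<Omega> = {}"
  proof (rule ccontr)
    assume "ball c t \<inter> frontier \<Omega> \<noteq> {}"
    then obtain z where z: "z \<in> frontier \<Omega>" "dist c z < t" by auto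
    have "infdist c (frontier \<Omega>) \<le> dist c z" by (rule infdist_le[OF z(1)])
    thus False using z dt by (simp add: dist_bd_def c_def N_def)
  qed
  have "g y \<bullet> (- N) < 0" using nf(2) gnz by simp
  from decreasing_along_descent_direction[OF der this] obtain d1 where
    d1: "d1 > 0" "\<forall>s. 0 < s \<and> s < d1 \<longrightarrow> \<rho> (y + s *\<^sub>R (- N)) < \<rho> y"
    by blast
  obtain r where r: "r > 0" "ball y r \<subseteq> U" using oU yU openE by blast
  obtain s where s: "s > 0" "s < d1" "s < 2 * t" "s * 1 < r"
    using exists_small_positive[OF d1(1) _ zero_le_one r(1), of "2 * t"] t by auto
  have "dist y (y + s *\<^sub>R (- N)) = s" using s nf(1) by (simp add: dist_norm)
  hence inU: "y + s *\<^sub>R (- N) \<in> U" using r s by auto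
  have "\<rho> (y + s *\<^sub>R (- N)) < 0"
    using d1 s C2_defining_zero_on_frontier[OF C oO y] by auto
  hence inO: "y + s *\<^sub>R (- N) \<in> \<Omega>" using inU eq by blast
  have "c - (y + s *\<^sub>R (- N)) = (s - t) *\<^sub>R N" by (simp add: c_def algebra_simps)
  hence "dist c (y + s *\<^sub>R (- N)) = \<bar>t - s\<bar>" using nf(1) by (simp add: dist_norm)
  hence "y + s *\<^sub>R (- N) \<in> ball c t" using s t by auto
  hence "ball c t \<inter> \<Omega> \<noteq> {}" using inO by blast
  hence "ball c t - \<Omega> = {}"
    using connected_Int_frontier[OF connected_ball] disj by blast
  thus ?thesis by (auto simp: c_def N_def)
qed

text \<open>The set of times t for which y - t N is at distance exactly t from a set containing
  y is an interval starting at 0 (the distance is 1-Lipschitz and at most |y - (y - s N)|).\<close>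
lemma infdist_along_normal_down:
  fixes N :: "'a::real_normed_vector"
  assumes y: "y \<in> A" and N: "norm N = 1"
    and dt: "infdist (y - t *\<^sub>R N) A = t" and s: "0 \<le> s" "s \<le> t"
  shows "infdist (y - s *\<^sub>R N) A = s"
proof -
  have "infdist (y - s *\<^sub>R N) A \<le> dist (y - s *\<^sub>R N) y" by (rule infdist_le[OF y])
  also have "\<dots> = s" using N s(1) by (simp add: dist_norm)
  finally have up: "infdist (y - s *\<^sub>R N) A \<le> s" .
  have "(y - t *\<^sub>R N) - (y - s *\<^sub>R N) = (s - t) *\<^sub>R N" by (simp add: algebra_simps)
  hence "dist (y - t *\<^sub>R N) (y - s *\<^sub>R N) = t - s" using N s by (simp add: dist_norm)
  hence "t \<le> infdist (y - s *\<^sub>R N) A + (t - s)"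
    using infdist_triangle[of "y - t *\<^sub>R N" A "y - s *\<^sub>R N"] dt by simp
  thus ?thesis using up by linarith
qed

subsection \<open>The differential of the Gauss map on tangent vectors\<close>

text \<open>Indeed, to
  first order rho (y + s v + a N) = a |g y|, which changes sign between a = -e s and
  a = e s, so the intermediate value theorem yields a zero, i.e. a boundary point.\<close>
lemma boundary_points_above_tangent:
  assumes C: "C2_defining \<Omega> y U \<rho> g" and oO: "open \<Omega>" and y: "y \<in> frontier \<Omega>"
    and v: "g y \<bullet> v = 0" and e: "e > 0"
  shows "\<exists>\<delta>>0. \<forall>s. 0 < s \<and> s < \<delta> \<longrightarrow>
     (\<exists>a. \<bar>a\<bar> \<le> e * s \<and> y + s *\<^sub>R v + a *\<^sub>R outer_normal \<Omega> y \<in> frontier \<Omega> \<inter> U)"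
proof -
  define N where "N = outer_normal \<Omega> y"
  define G where "G = norm (g y)"
  note nf = outer_normal_facts[OF C oO y, folded N_def G_def]
  have G0: "G > 0" and oU: "open U" and yU: "y \<in> U"
    and der: "(\<rho> has_derivative (\<lambda>h. g y \<bullet> h)) (at y)"
    using C unfolding C2_defining_def G_def by auto
  have r0: "\<rho> y = 0" using C2_defining_zero_on_frontier[OF C oO y] .
  define c where "c = norm v + e"
  have c0: "c > 0" using e by (simp add: c_def add_nonneg_pos)
  define ep where "ep = e * G / (2 * c)"
  have ep0: "ep > 0" using e G0 c0 by (simp add: ep_def)
  obtain d where d0: "d > 0" and dd: "\<And>z. norm (z - y) < d \<Longrightarrow>
      norm (\<rho> z - \<rho> y - g y \<bullet> (z - y)) \<le> ep * norm (z - y)"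
    using der ep0 unfolding has_derivative_at_alt by blast
  obtain r where r0': "r > 0" and rU: "ball y r \<subseteq> U" using oU yU openE by blast
  define \<delta> where "\<delta> = min d r / c"
  have \<delta>0: "\<delta> > 0" using d0 r0' c0 by (simp add: \<delta>_def)
  show ?thesis
  proof (rule exI[of _ \<delta>], intro conjI allI impI \<delta>0)
    fix s :: real assume s: "0 < s \<and> s < \<delta>"
    have sc: "s * c < min d r" using s c0 by (simp add: \<delta>_def pos_less_divide_eq)
    define x where "x a = y + s *\<^sub>R v + a *\<^sub>R N" for a
    have near: "norm (x a - y) \<le> s * c" if "\<bar>a\<bar> \<le> e * s" for a
    proof -
      have "x a - y = s *\<^sub>R v + a *\<^sub>R N" by (simp add: x_def)
      hence "norm (x a - y) \<le> norm (s *\<^sub>R v) + norm (a *\<^sub>R N)"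
        by (metis norm_triangle_ineq)
      also have "\<dots> \<le> s * c" using s nf(1) that by (simp add: c_def algebra_simps)
      finally show ?thesis .
    qed
    have inU: "x a \<in> U" if "\<bar>a\<bar> \<le> e * s" for a
      using near[OF that] sc rU by (auto simp: dist_norm norm_minus_commute)
    have approx: "\<bar>\<rho> (x a) - a * G\<bar> \<le> e * s * G / 2" if "\<bar>a\<bar> \<le> e * s" for a
    proof -
      have "g y \<bullet> (x a - y) = a * G" using v nf(2) by (simp add: x_def inner_add_right G_def)
      hence "\<bar>\<rho> (x a) - a * G\<bar> \<le> ep * norm (x a - y)"
        using dd[of "x a"] near[OF that] sc r0 by simp
      also have "\<dots> \<le> ep * (s * c)" using near[OF that] ep0 by simp
      also have "\<dots> = e * s * G / 2" using c0 by (simp add: ep_def)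
      finally show ?thesis .
    qed
    have "continuous_on {- (e * s)..e * s} (\<rho> \<circ> x)"
    proof (rule continuous_on_compose)
      show "continuous_on {- (e * s)..e * s} x" unfolding x_def by (intro continuous_intros)
      show "continuous_on (x ` {- (e * s)..e * s}) \<rho>"
        using inU by (intro continuous_on_subset[OF C2_defining_continuous[OF C]]) auto
    qed
    then obtain a where "\<bar>a\<bar> \<le> e * s" "\<rho> (x a) = 0"
      using zero_of_nearly_linear_function[of "e * s" "\<rho> \<circ> x" G] approx e s G0 by auto
    moreover have "x a \<in> frontier \<Omega>"
      using C2_defining_zero_imp_frontier[OF C inU[OF \<open>\<bar>a\<bar> \<le> e * s\<close>]] \<open>\<rho> (x a) = 0\<close> .
    ultimately show "\<exists>a. \<bar>a\<bar> \<le> e * s \<and> y + s *\<^sub>R v + a *\<^sub>R outer_normal \<Omega> y \<in> frontier \<Omega> \<inter> U"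
      using inU unfolding x_def N_def by blast
  qed
qed

lemma tangential_boundary_sequence:
  assumes C: "C2_defining \<Omega> y U \<rho> g" and oO: "open \<Omega>" and y: "y \<in> frontier \<Omega>"
    and v: "g y \<bullet> v = 0"
  obtains s a where "\<And>k. s k > 0" "s \<longlonglongrightarrow> 0" "(\<lambda>k. a k / s k) \<longlonglongrightarrow> 0"
    "\<And>k. y + s k *\<^sub>R v + a k *\<^sub>R outer_normal \<Omega> y \<in> frontier \<Omega> \<inter> U"
proof -
  define N where "N = outer_normal \<Omega> y"
  have "\<exists>p. 0 < fst p \<and> fst p < 1 / real (Suc k) \<and> \<bar>snd p / fst p\<bar> < 1 / real (Suc k)
      \<and> y + fst p *\<^sub>R v + snd p *\<^sub>R N \<in> frontier \<Omega> \<inter> U" for k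
  proof -
    define e where "e = 1 / (2 * real (Suc k))"
    have e0: "e > 0" and e1: "e < 1 / real (Suc k)" by (simp_all add: e_def field_simps)
    obtain \<delta> where \<delta>: "\<delta> > 0" "\<forall>s. 0 < s \<and> s < \<delta> \<longrightarrow>
        (\<exists>a. \<bar>a\<bar> \<le> e * s \<and> y + s *\<^sub>R v + a *\<^sub>R N \<in> frontier \<Omega> \<inter> U)"
      using boundary_points_above_tangent[OF C oO y v e0] unfolding N_def by blast
    obtain s where s: "s > 0" "s < \<delta>" "s < 1 / real (Suc k)"
      using exists_small_positive[OF \<delta>(1), of "1 / real (Suc k)" 0 1] by auto
    then obtain a where a: "\<bar>a\<bar> \<le> e * s" "y + s *\<^sub>R v + a *\<^sub>R N \<in> frontier \<Omega> \<inter> U"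
      using \<delta>(2) by blast
    have "\<bar>a / s\<bar> \<le> e" using a(1) s(1) by (simp add: abs_divide pos_divide_le_eq)
    thus ?thesis using s a e1 by (intro exI[of _ "(s, a)"]) auto
  qed
  then obtain P where P: "\<And>k. 0 < fst (P k) \<and> fst (P k) < 1 / real (Suc k)
      \<and> \<bar>snd (P k) / fst (P k)\<bar> < 1 / real (Suc k)
      \<and> y + fst (P k) *\<^sub>R v + snd (P k) *\<^sub>R N \<in> frontier \<Omega> \<inter> U"
    by metis
  show ?thesis
  proof (rule that[of "\<lambda>k. fst (P k)" "\<lambda>k. snd (P k)"])
    have "norm (fst (P k)) < 1 / real (Suc k)" "norm (snd (P k) / fst (P k)) < 1 / real (Suc k)"
      for k using P[of k] by auto
    thus "(\<lambda>k. fst (P k)) \<longlonglongrightarrow> 0" "(\<lambda>k. snd (P k) / fst (P k)) \<longlonglongrightarrow> 0"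
      by (auto intro: LIMSEQ_norm_0)
  qed (use P N_def in auto)
qed

text \<open>Both sides are limits of difference quotients along the tangential boundary
  sequence, where N = g / |g| and v is orthogonal to g y.\<close>
lemma gauss_map_differential_on_tangents:
  assumes C: "C2_defining \<Omega> y U \<rho> g" and oO: "open \<Omega>" and y: "y \<in> frontier \<Omega>"
    and Dy: "(g has_derivative Hf) (at y)"
    and L: "(outer_normal \<Omega> has_derivative L) (at y within frontier \<Omega>)"
    and v: "g y \<bullet> v = 0" and vnz: "v \<noteq> 0"
  shows "v \<bullet> L v = (v \<bullet> Hf v) / norm (g y)"
proof -
  define N where "N = outer_normal \<Omega> y"
  have vN: "v \<bullet> N = 0"
    using v outer_normal_eq[OF C oO y] by (simp add: N_def inner_commute)
  obtain s a where spos: "\<And>k. s k > 0" and s0: "s \<longlonglongrightarrow> 0" and r0: "(\<lambda>k. a k / s k) \<longlonglongrightarrow> 0"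
    and xFU: "\<And>k. y + s k *\<^sub>R v + a k *\<^sub>R N \<in> frontier \<Omega> \<inter> U"
    using tangential_boundary_sequence[OF C oO y v] unfolding N_def by blast
  define x where "x k = y + s k *\<^sub>R v + a k *\<^sub>R N" for k
  have xF: "\<And>k. x k \<in> frontier \<Omega>" and xU: "\<And>k. x k \<in> U" using xFU by (auto simp: x_def)
  have xd: "(x k - y) /\<^sub>R s k = v + (a k / s k) *\<^sub>R N" for k
    using spos[of k] by (simp add: x_def scaleR_add_right divide_inverse_commute)
  have xv: "(\<lambda>k. (x k - y) /\<^sub>R s k) \<longlonglongrightarrow> v"
    unfolding xd using tendsto_add[OF tendsto_const tendsto_scaleR[OF r0 tendsto_const]] by simp
  have xne: "x k \<noteq> y" for k
  proof
    assume "x k = y"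
    hence "v \<bullet> (x k - y) = 0" by simp
    moreover have "v \<bullet> (x k - y) = s k * (v \<bullet> v)" using vN by (simp add: x_def inner_add_right)
    ultimately show False using spos[of k] vnz by simp
  qed
  have QL: "(\<lambda>k. (outer_normal \<Omega> (x k) - N) /\<^sub>R s k) \<longlonglongrightarrow> L v"
    using difference_quotient_sequence[OF L xF xne s0 spos xv] by (simp add: N_def)
  have Qg: "(\<lambda>k. (g (x k) - g y) /\<^sub>R s k) \<longlonglongrightarrow> Hf v"
    using difference_quotient_sequence[of g Hf y UNIV, OF _ _ xne s0 spos xv] Dy by simp
  have "x \<longlonglongrightarrow> y"
  proof -
    have "(\<lambda>k. y + s k *\<^sub>R ((x k - y) /\<^sub>R s k)) \<longlonglongrightarrow> y + 0 *\<^sub>R v"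
      by (intro tendsto_intros s0 xv)
    thus ?thesis using spos by (simp add: less_imp_neq[symmetric])
  qed
  hence ng: "(\<lambda>k. norm (g (x k))) \<longlonglongrightarrow> norm (g y)"
    by (intro tendsto_norm isCont_tendsto_compose[OF has_derivative_continuous[OF Dy]])
  have gnz: "g y \<noteq> 0" using C unfolding C2_defining_def by auto
  text \<open>Since v is orthogonal to N, the normal quotient is the gradient quotient over |g|.\<close>
  have eqk: "v \<bullet> ((outer_normal \<Omega> (x k) - N) /\<^sub>R s k)
      = (v \<bullet> ((g (x k) - g y) /\<^sub>R s k)) / norm (g (x k))" for k
    using v vN outer_normal_eq[OF C2_defining_recenter[OF C xU] oO xF]
    by (simp add: inner_diff_right divide_inverse inner_commute)
  have "(\<lambda>k. v \<bullet> ((outer_normal \<Omega> (x k) - N) /\<^sub>R s k)) \<longlonglongrightarrow> v \<bullet> L v"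
    by (intro tendsto_intros QL)
  moreover have "(\<lambda>k. (v \<bullet> ((g (x k) - g y) /\<^sub>R s k)) / norm (g (x k))) \<longlonglongrightarrow> (v \<bullet> Hf v) / norm (g y)"
    using gnz by (intro tendsto_intros Qg ng) auto
  ultimately show ?thesis unfolding eqk by (rule LIMSEQ_unique)
qed

subsection \<open>A second-order bound from the interior ball\<close>

lemma parabola_in_ball:
  fixes y v N :: "'a::real_inner"
  assumes vN: "v \<bullet> N = 0" and N: "norm N = 1" and t: "t > 0"
    and s: "0 < s" "s < 1" and small: "s * \<beta>^2 < 2 * t * \<beta> - v \<bullet> v"
  shows "y + s *\<^sub>R v - (\<beta> * s^2) *\<^sub>R N \<in> ball (y - t *\<^sub>R N) t"
proof -
  define V where "V = v \<bullet> v"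
  have eq: "y + s *\<^sub>R v - (\<beta> * s^2) *\<^sub>R N - (y - t *\<^sub>R N) = s *\<^sub>R v + (t - \<beta> * s^2) *\<^sub>R N"
    by (simp add: algebra_simps)
  have "norm (y + s *\<^sub>R v - (\<beta> * s^2) *\<^sub>R N - (y - t *\<^sub>R N)) ^ 2
      = s^2 * V + (t - \<beta> * s^2)^2"
    unfolding eq using norm_orth_sq[OF vN N, of s "t - \<beta> * s^2"] by (simp add: V_def)
  also have "\<dots> = t^2 + s^2 * (V - 2 * t * \<beta> + \<beta>^2 * s^2)"
    by (simp add: power2_eq_square algebra_simps)
  also have "\<dots> < t^2"
  proof -
    have "s^2 \<le> s" using s by (simp add: power2_eq_square mult_left_le_one_le)
    hence "\<beta>^2 * s^2 \<le> s * \<beta>^2" by (metis mult.commute mult_left_mono zero_le_power2)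
    hence "V - 2 * t * \<beta> + \<beta>^2 * s^2 < 0" using small by (simp add: V_def)
    thus ?thesis using s by (simp add: mult_pos_neg)
  qed
  finally have "norm (y + s *\<^sub>R v - (\<beta> * s^2) *\<^sub>R N - (y - t *\<^sub>R N)) < t"
    using t by (simp add: power_less_imp_less_base)
  thus ?thesis by (metis dist_norm dist_commute mem_ball)
qed

lemma gradient_along_parabola_deriv:
  fixes y v N :: "'a::real_inner"
  assumes Dy: "(g has_derivative Hf) (at y)"
  shows "((\<lambda>s. g (y + s *\<^sub>R v - (\<beta> * s^2) *\<^sub>R N) \<bullet> (v - (2 * \<beta> * s) *\<^sub>R N))
    has_real_derivative (Hf v \<bullet> v - 2 * \<beta> * (g y \<bullet> N))) (at 0)"
proof -
  define z where "z s = y + s *\<^sub>R v - (\<beta> * s^2) *\<^sub>R N" for s :: real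
  have "(z has_derivative (\<lambda>h. h *\<^sub>R v)) (at 0)"
    unfolding z_def by (auto intro!: derivative_eq_intros)
  hence gz: "((g \<circ> z) has_derivative (Hf \<circ> (\<lambda>h. h *\<^sub>R v))) (at 0)"
    using Dy by (intro diff_chain_at) (simp_all add: z_def)
  have wd: "((\<lambda>s. v - (2 * \<beta> * s) *\<^sub>R N) has_derivative (\<lambda>h. h *\<^sub>R (- (2 * \<beta>) *\<^sub>R N))) (at 0)"
    by (auto intro!: derivative_eq_intros simp: algebra_simps)
  have "((\<lambda>s. (g \<circ> z) s \<bullet> (v - (2 * \<beta> * s) *\<^sub>R N)) has_derivative
     (\<lambda>h. (g \<circ> z) 0 \<bullet> (h *\<^sub>R (- (2 * \<beta>) *\<^sub>R N)) + (Hf \<circ> (\<lambda>h. h *\<^sub>R v)) h \<bullet> (v - (2 * \<beta> * 0) *\<^sub>R N))) (at 0)"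
    by (rule has_derivative_inner[OF gz wd])
  moreover have "(\<lambda>h. (g \<circ> z) 0 \<bullet> (h *\<^sub>R (- (2 * \<beta>) *\<^sub>R N)) + (Hf \<circ> (\<lambda>h. h *\<^sub>R v)) h \<bullet> (v - (2 * \<beta> * 0) *\<^sub>R N))
      = (*) (Hf v \<bullet> v - 2 * \<beta> * (g y \<bullet> N))"
    using linear_cmul[OF has_derivative_linear[OF Dy]] by (auto simp: fun_eq_iff z_def algebra_simps)
  ultimately show ?thesis unfolding has_field_derivative_def z_def by (simp add: comp_def)
qed

text \<open>If the tangential curvature v . Dg(y) v exceeds 2 beta |g y|, the defining
  function becomes positive along the parabola y + s v - beta s^2 N for small s > 0:
  its derivative along the parabola vanishes at s = 0 and has positive slope there.\<close>
lemma defining_fun_positive_on_parabola: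
  assumes C: "C2_defining \<Omega> y U \<rho> g" and oO: "open \<Omega>" and y: "y \<in> frontier \<Omega>"
    and Dy: "(g has_derivative Hf) (at y)"
    and v: "g y \<bullet> v = 0" and \<beta>: "2 * \<beta> * norm (g y) < v \<bullet> Hf v"
  shows "\<exists>d>0. \<forall>s. 0 < s \<and> s < d \<longrightarrow>
     (let z = y + s *\<^sub>R v - (\<beta> * s^2) *\<^sub>R outer_normal \<Omega> y in z \<in> U \<and> \<rho> z > 0)"
proof -
  define N where "N = outer_normal \<Omega> y"
  note nf = outer_normal_facts[OF C oO y, folded N_def]
  have yU: "y \<in> U" and oU: "open U"
    and der: "\<And>x. x \<in> U \<Longrightarrow> (\<rho> has_derivative (\<lambda>h. g x \<bullet> h)) (at x)"
    using C unfolding C2_defining_def by auto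
  define z where "z s = y + s *\<^sub>R v - (\<beta> * s^2) *\<^sub>R N" for s :: real
  define K where "K s = g (z s) \<bullet> (v - (2 * \<beta> * s) *\<^sub>R N)" for s :: real
  have zd: "(z has_vector_derivative (v - (2 * \<beta> * s) *\<^sub>R N)) (at s)" for s
    unfolding z_def by (auto intro!: derivative_eq_intros simp: algebra_simps)
  have z0: "z 0 = y" by (simp add: z_def)
  text \<open>K is the derivative of rho along the parabola; its slope at 0 is
    v . Dg(y) v - 2 beta |g y| > 0 while K 0 = g y . v = 0.\<close>
  have "DERIV K 0 :> Hf v \<bullet> v - 2 * \<beta> * (g y \<bullet> N)"
    using gradient_along_parabola_deriv[OF Dy] by (simp add: K_def[abs_def] z_def)
  moreover have "Hf v \<bullet> v - 2 * \<beta> * (g y \<bullet> N) > 0"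
    using \<beta> nf(2) by (simp add: inner_commute)
  ultimately obtain d2 where d2: "d2 > 0" "\<And>h. 0 < h \<Longrightarrow> h < d2 \<Longrightarrow> K 0 < K (0 + h)"
    using DERIV_pos_inc_right by blast
  have K0: "K 0 = 0" using v by (simp add: K_def z0)
  obtain r where r: "r > 0" "ball y r \<subseteq> U" using oU yU openE by blast
  have "isCont z 0" using zd[of 0] by (rule has_vector_derivative_continuous)
  then obtain d3 where d3: "d3 > 0" "z ` ball 0 d3 \<subseteq> ball y r"
    using r(1) z0 by (metis continuous_at_ball)
  have zU: "z x \<in> U" if "\<bar>x\<bar> < d3" for x
  proof -
    have "x \<in> ball 0 d3" using that by simp
    thus ?thesis using d3(2) r(2) by blast
  qed
  show ?thesis
  proof (intro exI[of _ "min d2 d3"] conjI allI impI)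
    show "min d2 d3 > 0" using d2 d3 by simp
    fix s :: real assume s: "0 < s \<and> s < min d2 d3"
    have "DERIV (\<lambda>s. \<rho> (z s)) x :> K x" if "0 \<le> x" "x \<le> s" for x
      unfolding K_def using has_real_derivative_along_curve[OF zd der] zU that s by simp
    then obtain \<xi> where xi: "0 < \<xi>" "\<xi> < s" "\<rho> (z s) - \<rho> (z 0) = (s - 0) * K \<xi>"
      using MVT2[of 0 s] s by blast
    have "K \<xi> > 0" using d2(2)[of \<xi>] xi s K0 by simp
    hence "\<rho> (z s) > 0"
      using xi s C2_defining_zero_on_frontier[OF C oO y] by (simp add: z0)
    thus "let z = y + s *\<^sub>R v - (\<beta> * s^2) *\<^sub>R outer_normal \<Omega> y in z \<in> U \<and> \<rho> z > 0"
      using zU[of s] s by (simp add: z_def N_def)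
  qed
qed

text \<open>Second-order comparison with the interior ball: if d(y - t N) = t, then every
  tangent vector satisfies v . Dg(y) v <= |g y| |v|^2 / t.  Otherwise a parabola as
  above stays in the interior ball (hence in Omega) while rho becomes positive on it.\<close>
lemma hessian_bound_from_interior_ball:
  assumes C: "C2_defining \<Omega> y U \<rho> g" and oO: "open \<Omega>" and y: "y \<in> frontier \<Omega>"
    and Dy: "(g has_derivative Hf) (at y)"
    and t: "t > 0" and dt: "dist_bd \<Omega> (y - t *\<^sub>R outer_normal \<Omega> y) = t"
    and v: "g y \<bullet> v = 0"
  shows "v \<bullet> Hf v \<le> norm (g y) * (v \<bullet> v) / t"
proof (rule ccontr)
  define N where "N = outer_normal \<Omega> y"
  define G where "G = norm (g y)"
  define V where "V = v \<bullet> v"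
  define q where "q = v \<bullet> Hf v"
  note nf = outer_normal_facts[OF C oO y, folded N_def]
  have G0: "G > 0" using C unfolding C2_defining_def G_def by auto
  have "G * (N \<bullet> v) = 0" using v nf(3) by (metis inner_scaleR_left G_def)
  hence vN: "v \<bullet> N = 0" using G0 by (simp add: inner_commute)
  assume "\<not> v \<bullet> Hf v \<le> norm (g y) * (v \<bullet> v) / t"
  hence "G * V / t < q" by (simp add: q_def G_def V_def)
  hence "q * t > G * V" using t by (simp add: pos_divide_less_eq)
  hence qb: "q / (2 * G) > V / (2 * t)" using G0 t by (simp add: field_simps)
  text \<open>Choose beta strictly between |v|^2 / (2 t) and q / (2 |g y|).\<close>
  define \<beta> where "\<beta> = (V / (2 * t) + q / (2 * G)) / 2"
  have b1: "\<beta> > V / (2 * t)" and b2: "\<beta> < q / (2 * G)" using qb by (simp_all add: \<beta>_def)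
  have room: "2 * t * \<beta> - V > 0" using b1 t by (simp add: field_simps)
  have "2 * \<beta> * norm (g y) < v \<bullet> Hf v" using b2 G0 by (simp add: field_simps G_def q_def)
  from defining_fun_positive_on_parabola[OF C oO y Dy v this] obtain d where d: "d > 0"
    "\<And>s. 0 < s \<Longrightarrow> s < d \<Longrightarrow> y + s *\<^sub>R v - (\<beta> * s^2) *\<^sub>R N \<in> U
        \<and> \<rho> (y + s *\<^sub>R v - (\<beta> * s^2) *\<^sub>R N) > 0"
    unfolding N_def Let_def by blast
  obtain s where s: "s > 0" "s < 1" "s < d" "s * \<beta>^2 < 2 * t * \<beta> - V"
    using exists_small_positive[OF zero_less_one d(1) zero_le_power2 room] by blast
  have "y + s *\<^sub>R v - (\<beta> * s^2) *\<^sub>R N \<in> \<Omega>"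
    using parabola_in_ball[OF vN nf(1) t s(1,2), of \<beta> y] s(4)
      interior_ball_in_domain[OF C oO y t dt] by (auto simp: V_def N_def)
  moreover have "\<Omega> \<inter> U = {x\<in>U. \<rho> x < 0}" using C unfolding C2_defining_def by blast
  ultimately show False using d(2)[OF s(1,3)] by (metis IntI less_asym mem_Collect_eq)
qed

subsection \<open>Principal curvatures along a distance-realising normal segment\<close>

lemma eigenvector_of_singular_shift:
  fixes f :: "real^'n \<Rightarrow> real^'n"
  assumes lin: "linear f" and sing: "det (k *\<^sub>R mat 1 - matrix f) = 0"
  shows "\<exists>w. w \<noteq> 0 \<and> f w = k *\<^sub>R w"
proof -
  define A where "A = k *\<^sub>R mat 1 - matrix f"
  have "\<exists>w. A *v w = 0 \<and> w \<noteq> 0"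
  proof (rule ccontr)
    assume "\<not> ?thesis"
    hence "\<exists>B. B ** A = mat 1" using matrix_left_invertible_ker by blast
    hence "invertible A" using invertible_left_inverse by blast
    thus False using sing invertible_det_nz by (auto simp: A_def)
  qed
  moreover have "A *v w = k *\<^sub>R w - f w" for w
    unfolding A_def matrix_vector_mult_diff_rdistrib matrix_works[OF lin[folded linear_matrix_vector_mul_eq]]
    by (simp add: scaleR_matrix_vector_assoc[symmetric])
  ultimately show ?thesis by auto
qed

text \<open>An eigenvalue k \<noteq> 0 of L composed with the orthogonal projection onto the
  hyperplane normal to N has a tangential eigen-direction v: v . N = 0 and
  v . L v = k |v|^2 (take v the projection of an eigenvector w; then L v = k w).\<close>
lemma tangential_eigenvector:
  fixes L :: "real^'n \<Rightarrow> real^'n"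
  assumes lin: "linear L" and N: "norm N = 1" and k: "k \<noteq> 0"
    and sing: "det (k *\<^sub>R mat 1 - matrix (\<lambda>w. L (w - (w \<bullet> N) *\<^sub>R N))) = 0"
  shows "\<exists>v. v \<noteq> 0 \<and> v \<bullet> N = 0 \<and> v \<bullet> L v = k * (v \<bullet> v)"
proof -
  define P where "P w = w - (w \<bullet> N) *\<^sub>R N" for w :: "real^'n"
  have "linear P" unfolding P_def
    by (rule linearI) (simp_all add: inner_add_left algebra_simps scaleR_add_left)
  hence "linear (\<lambda>w. L (P w))" using linear_compose[OF _ lin] by (simp add: comp_def)
  then obtain w where w: "w \<noteq> 0" "L (P w) = k *\<^sub>R w"
    using eigenvector_of_singular_shift sing unfolding P_def by blast
  have NN: "N \<bullet> N = 1" using N by (simp add: power2_norm_eq_inner[symmetric])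
  have "P w \<bullet> N = 0" by (simp add: P_def inner_diff_left NN)
  moreover have "P w \<noteq> 0" using w k linear_0[OF lin] by auto
  moreover have "P w \<bullet> w = P w \<bullet> P w"
    by (simp add: P_def inner_diff_left inner_diff_right NN inner_commute algebra_simps)
  ultimately show ?thesis using w(2) by (intro exI[of _ "P w"]) auto
qed

text \<open>For
  kappa_j > 0 take a tangential eigen-direction v with v . L v = kappa_j |v|^2;
  the Gauss map identity and the Hessian bound give kappa_j |v|^2 <= |v|^2 / t.\<close>
lemma principal_curvature_bound:
  fixes \<Omega> :: "(real^'n) set"
  assumes C: "C2_defining \<Omega> y U \<rho> g" and oO: "open \<Omega>" and y: "y \<in> frontier \<Omega>"
    and pc: "principal_curvatures \<Omega> y \<kappa>"
    and t: "t > 0" and dt: "dist_bd \<Omega> (y - t *\<^sub>R outer_normal \<Omega> y) = t"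
    and j: "j < CARD('n) - 1"
  shows "t * \<kappa> j \<le> 1"
proof (cases "\<kappa> j \<le> 0")
  case True
  thus ?thesis using t by (smt (verit) mult_nonneg_nonpos)
next
  case False
  define k where "k = \<kappa> j"
  have k0: "k > 0" using False by (simp add: k_def)
  define N where "N = outer_normal \<Omega> y"
  note nf = outer_normal_facts[OF C oO y, folded N_def]
  obtain D where D: "\<forall>x\<in>U. (g has_derivative blinfun_apply (D x)) (at x)"
    and yU: "y \<in> U" using C unfolding C2_defining_def by blast
  have Dy: "(g has_derivative blinfun_apply (D y)) (at y)" using D yU by blast
  obtain L where L: "(outer_normal \<Omega> has_derivative L) (at y within frontier \<Omega>)"
    and chp: "\<And>s::real. det (s *\<^sub>R mat 1 - matrix (\<lambda>w. L (w - (w \<bullet> N) *\<^sub>R N)))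
        = s * (\<Prod>j<CARD('n) - 1. (s - \<kappa> j))"
    using pc unfolding principal_curvatures_def tangent_proj_def N_def comp_def by blast
  have "det (k *\<^sub>R mat 1 - matrix (\<lambda>w. L (w - (w \<bullet> N) *\<^sub>R N))) = 0"
    using chp[of k] j by (auto simp: k_def prod_zero_iff)
  from tangential_eigenvector[OF has_derivative_linear[OF L] nf(1) _ this] k0
  obtain v where vnz: "v \<noteq> 0" and Nv: "v \<bullet> N = 0" and Lv: "v \<bullet> L v = k * (v \<bullet> v)"
    by auto
  have gv: "g y \<bullet> v = 0" using Nv by (subst nf(3)) (simp add: inner_commute)
  define G where "G = norm (g y)"
  define V where "V = v \<bullet> v"
  have G0: "G > 0" using C yU unfolding C2_defining_def G_def by auto
  have V0: "V > 0" using vnz by (simp add: V_def)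
  have "k * V = (v \<bullet> blinfun_apply (D y) v) / G"
    using gauss_map_differential_on_tangents[OF C oO y Dy L gv vnz] Lv by (simp add: V_def G_def)
  also have "\<dots> \<le> (G * V / t) / G"
    using hessian_bound_from_interior_ball[OF C oO y Dy t dt gv] G0
    by (intro divide_right_mono) (simp_all add: V_def G_def)
  also have "\<dots> = (1 / t) * V" using G0 by simp
  finally have "k \<le> 1 / t" using V0 by (rule mult_right_le_imp_le)
  thus ?thesis using t by (simp add: k_def field_simps)
qed

text \<open>The bound t kappa_j <= 1 persists up to the cut value lambda(y): every t below
  lambda(y) lies below some distance-realising time, and the set of such times is an
  interval starting at 0.\<close>
lemma curvature_bound_below_cut:
  fixes \<Omega> :: "(real^'n) set"
  assumes C: "C2_defining \<Omega> y U \<rho> g" and oO: "open \<Omega>" and y: "y \<in> frontier \<Omega>"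
    and pc: "principal_curvatures \<Omega> y \<kappa>"
    and t: "0 \<le> t" "t \<le> cut_value \<Omega> y" and j: "j < CARD('n) - 1"
  shows "t * \<kappa> j \<le> 1"
proof (rule ccontr)
  define N where "N = outer_normal \<Omega> y"
  define S where "S = {t. t \<ge> 0 \<and> dist_bd \<Omega> (y - t *\<^sub>R N) = t}"
  have N1: "norm N = 1" using outer_normal_facts[OF C oO y] by (simp add: N_def)
  have S0: "0 \<in> S" using y by (simp add: S_def dist_bd_def)
  assume "\<not> t * \<kappa> j \<le> 1"
  hence kp: "\<kappa> j > 0" using t(1) by (smt (verit) mult_nonneg_nonpos)
  hence ik: "1 / \<kappa> j < t" using \<open>\<not> t * \<kappa> j \<le> 1\<close> by (simp add: divide_less_eq mult.commute)
  define t' where "t' = (t + 1 / \<kappa> j) / 2"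
  have t'1: "1 / \<kappa> j < t'" "t' < t" using ik by (simp_all add: t'_def)
  have t'0: "t' > 0" using t'1(1) kp by (smt (verit) divide_pos_pos)
  have "\<exists>s\<in>S. t' < s"
  proof (cases "bdd_above S")
    case True
    have "t' < Sup S" using t t'1 by (simp add: cut_value_def S_def N_def)
    thus ?thesis using True S0 less_cSup_iff[of S t'] by blast
  next
    case False
    thus ?thesis unfolding bdd_above_def by (meson not_le)
  qed
  then obtain s where "s \<in> S" "t' < s" by blast
  hence "dist_bd \<Omega> (y - t' *\<^sub>R N) = t'"
    using infdist_along_normal_down[OF y N1, of s t'] t'0 by (simp add: S_def dist_bd_def)
  hence "t' * \<kappa> j \<le> 1"
    using principal_curvature_bound[OF C oO y pc t'0 _ j] by (simp add: N_def)
  moreover have "t' * \<kappa> j > 1" using t'1 kp by (simp add: divide_less_eq)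
  ultimately show False by simp
qed

subsection \<open>The real-variable estimate\<close>

lemma prod_le_mean_power:
  fixes x :: "nat \<Rightarrow> real"
  assumes m: "m \<ge> 1" and x: "\<And>i. i < m \<Longrightarrow> x i \<ge> 0"
  shows "(\<Prod>i<m. x i) \<le> ((\<Sum>i<m. x i) / m) ^ m"
proof -
  define P where "P = (\<Prod>i<m. x i)"
  have P0: "P \<ge> 0" unfolding P_def by (rule prod_nonneg) (use x in auto)
  have S0: "(\<Sum>i<m. x i) / m \<ge> 0" by (intro divide_nonneg_nonneg sum_nonneg) (use x in auto)
  show ?thesis
  proof (cases "P = 0")
    case True thus ?thesis using S0 by (simp add: P_def[symmetric])
  next
    case False
    hence Pp: "P > 0" using P0 by simp
    have "(\<Sum>i\<in>{..<m}. x i / card {..<m}) \<ge> (\<Prod>i\<in>{..<m}. x i) powr (1 / card {..<m})"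
      by (rule arith_geom_mean) (use m x in \<open>auto simp: lessThan_empty_iff\<close>)
    hence am: "P powr (1 / m) \<le> (\<Sum>i<m. x i) / m"
      by (simp add: P_def sum_divide_distrib)
    have "P = (P powr (1 / m)) ^ m" using m Pp by (simp add: powr_powr powr_realpow[symmetric])
    also have "\<dots> \<le> ((\<Sum>i<m. x i) / m) ^ m" by (rule power_mono[OF am]) simp
    finally show ?thesis by (simp add: P_def)
  qed
qed

lemma integral_one_minus_power:
  fixes H l :: real
  assumes H: "H > 0" and l: "l \<ge> 0"
  shows "integral {0..l} (\<lambda>t. (1 - t * H) ^ m) = (1 - (1 - l * H) ^ Suc m) / (real (Suc m) * H)"
proof -
  define F where "F t = - ((1 - t * H) ^ Suc m) / (real (Suc m) * H)" for t
  have "((\<lambda>t. (1 - t * H) ^ m) has_integral F l - F 0) {0..l}"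
  proof (rule fundamental_theorem_of_calculus[OF l])
    fix x assume "x \<in> {0..l}"
    have "((\<lambda>t. (1 - t * H) ^ Suc m) has_real_derivative real (Suc m) * (1 - x * H) ^ m * (- H)) (at x)"
      by (rule derivative_eq_intros refl | simp)+
    hence "(F has_real_derivative - (real (Suc m) * (1 - x * H) ^ m * (- H)) / (real (Suc m) * H)) (at x)"
      unfolding F_def[abs_def] by (intro DERIV_cdivide DERIV_minus)
    moreover have "- (real (Suc m) * (1 - x * H) ^ m * (- H)) / (real (Suc m) * H) = (1 - x * H) ^ m"
      using H by (simp add: field_simps del: of_nat_Suc)
    ultimately have "(F has_real_derivative (1 - x * H) ^ m) (at x)" by simp
    thus "(F has_vector_derivative (1 - x * H) ^ m) (at x within {0..l})"
      by (simp add: has_real_derivative_iff_has_vector_derivative has_vector_derivative_at_within)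
  qed
  moreover have "F l - F 0 = (1 - (1 - l * H) ^ Suc m) / (real (Suc m) * H)"
    by (simp add: F_def diff_divide_distrib)
  ultimately show ?thesis by (simp add: integral_unique)
qed

text \<open>For H > 0 the integrand is at most (1 - t H)^m by AM-GM, and the integral of the
  latter is (1 - (1 - l H)^(m+1)) / ((m + 1) H) with 0 <= 1 - l H.\<close>
lemma product_integral_mean_bound:
  fixes \<kappa> :: "nat \<Rightarrow> real" and l :: real
  assumes m: "m \<ge> 1" and bound: "\<And>t j. 0 \<le> t \<Longrightarrow> t \<le> l \<Longrightarrow> j < m \<Longrightarrow> t * \<kappa> j \<le> 1"
  shows "integral {0..l} (\<lambda>t. \<Prod>j<m. (1 - t * \<kappa> j)) * ((\<Sum>j<m. \<kappa> j) / real m)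
    \<le> 1 / real (Suc m)"
proof -
  define f where "f t = (\<Prod>j<m. (1 - t * \<kappa> j))" for t
  define H where "H = (\<Sum>j<m. \<kappa> j) / real m"
  have fint: "f integrable_on {0..l}"
    unfolding f_def by (intro integrable_continuous_interval continuous_intros)
  have "0 < 1 / real (Suc m)" by simp
  consider "H \<le> 0" | "l < 0" | "H > 0" "l \<ge> 0" by linarith
  thus ?thesis
  proof cases
    case 1
    have "integral {0..l} f \<ge> 0"
      by (rule integral_nonneg[OF fint]) (use bound in \<open>auto simp: f_def intro!: prod_nonneg\<close>)
    thus ?thesis using 1 \<open>0 < 1 / real (Suc m)\<close> unfolding f_def[symmetric] H_def[symmetric]
      by (smt (verit) mult_nonneg_nonpos)
  next
    case 2
    thus ?thesis by simp
  next
    case 3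
    have am: "f t \<le> (1 - t * H) ^ m" if "t \<in> {0..l}" for t
    proof -
      have "f t \<le> ((\<Sum>i<m. (1 - t * \<kappa> i)) / m) ^ m"
        unfolding f_def by (rule prod_le_mean_power[OF m]) (use bound that in auto)
      moreover have "(\<Sum>i<m. (1 - t * \<kappa> i)) / m = 1 - t * H"
        using m by (simp add: sum_subtractf sum_distrib_left[symmetric] H_def field_simps)
      ultimately show ?thesis by simp
    qed
    have "integral {0..l} f \<le> integral {0..l} (\<lambda>t. (1 - t * H) ^ m)"
      by (intro integral_le[OF fint] integrable_continuous_interval continuous_intros am)
    also have "\<dots> = (1 - (1 - l * H) ^ Suc m) / (real (Suc m) * H)"
      using integral_one_minus_power[OF 3] .
    finally have "integral {0..l} f * H \<le> (1 - (1 - l * H) ^ Suc m) / (real (Suc m) * H) * H"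
      using 3 by (intro mult_right_mono) auto
    hence I: "integral {0..l} f * H \<le> (1 - (1 - l * H) ^ Suc m) / real (Suc m)"
      using 3 by simp
    have "l * (\<Sum>j<m. \<kappa> j) \<le> (\<Sum>j<m. 1)"
      unfolding sum_distrib_left using bound 3 by (intro sum_mono) auto
    hence "l * H \<le> 1" using m by (simp add: H_def divide_le_eq mult.commute)
    hence "(1 - l * H) ^ Suc m \<ge> 0" by simp
    hence "(1 - (1 - l * H) ^ Suc m) / real (Suc m) \<le> 1 / real (Suc m)"
      by (intro divide_right_mono) auto
    hence "integral {0..l} f * H \<le> 1 / real (Suc m)" using I by linarith
    thus ?thesis by (simp add: f_def[abs_def] H_def)
  qed
qed

text \<open>phi(y) H(y) <= 1/n: the curvature bound t kappa_j <= 1 on [0, lambda(y)] feeds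
  the real-variable estimate with m = n - 1 >= 1.\<close>
theorem mainTheorem2:
  fixes \<Omega> :: "(real^'n) set" and y :: "real^'n" and \<kappa> :: "nat \<Rightarrow> real"
  assumes "CARD('n) \<ge> 2"
    and "bounded \<Omega>" and "connected \<Omega>" and "open \<Omega>" and "C2_boundary \<Omega>"
    and "y \<in> frontier \<Omega>"
    and "principal_curvatures \<Omega> y \<kappa>"
  shows "phi_fun \<Omega> y \<kappa> * mean_curv \<Omega> \<kappa> \<le> 1 / real CARD('n)"
proof -
  obtain U \<rho> g where C: "C2_defining \<Omega> y U \<rho> g"
    using assms(5,6) unfolding C2_boundary_def by blast
  have "CARD('n) - 1 \<ge> 1" and "Suc (CARD('n) - 1) = CARD('n)" using assms(1) by auto
  moreover have "\<And>t j. 0 \<le> t \<Longrightarrow> t \<le> cut_value \<Omega> y \<Longrightarrow> j < CARD('n) - 1 \<Longrightarrow> t * \<kappa> j \<le> 1"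
    using curvature_bound_below_cut[OF C assms(4,6,7)] by blast
  ultimately show ?thesis
    using product_integral_mean_bound[of "CARD('n) - 1" "cut_value \<Omega> y" \<kappa>]
    unfolding phi_fun_def mean_curv_def by simp
qed

end
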